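(* Let $\Omega\subset\mathbb R^n$ be a bounded domain, $\alpha<0$, and $\varphi:\partial\Omega\to\mathbb R$ a positive function. If $u$ is a positive solution of $$\mathrm{div}\left(\frac{Du}{\sqrt{1-|Du|^2}}\right)=\frac{\alpha}{u\sqrt{1-|Du|^2}}\ \text{ in }\Omega,\qquad u=\varphi\ \text{ on }\partial\Omega,\qquad |Du|<1\ \text{ in }\overline\Omega,$$ then there exists a constant $C_1=C_1(\alpha,\Omega,\varphi)>0$, depending only on $\alpha$, $\Omega$ and $\varphi$, such that $$\min_{\partial\Omega}\varphi\le u\le C_1\quad\text{in }\Omega.$$ *)

theory Defs
  imports "HOL-Analysis.Analysis"
begin

definition divergence :: "('a::euclidean_space \<Rightarrow> 'a) \<Rightarrow> 'a \<Rightarrow> real" where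
  "divergence V x = (\<Sum>i\<in>Basis. (frechet_derivative V (at x) i) \<bullet> i)"

definition bounded_domain :: "'a::euclidean_space set \<Rightarrow> bool" where
  "bounded_domain \<Omega> \<longleftrightarrow> open \<Omega> \<and> connected \<Omega> \<and> bounded \<Omega> \<and> \<Omega> \<noteq> {}"

definition is_solution :: "real \<Rightarrow> 'a::euclidean_space set \<Rightarrow> ('a \<Rightarrow> real) \<Rightarrow> ('a \<Rightarrow> real) \<Rightarrow> bool" where
  "is_solution \<alpha> \<Omega> \<phi> u \<longleftrightarrow>
    (\<exists>Du D2u.
      continuous_on (closure \<Omega>) u \<and>
      continuous_on (closure \<Omega>) Du \<and>
      (\<forall>x\<in>\<Omega>. (u has_derivative (\<lambda>h. Du x \<bullet> h)) (at x)) \<and>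
      (\<forall>x\<in>\<Omega>. (Du has_derivative D2u x) (at x)) \<and>
      (\<forall>i\<in>Basis. continuous_on \<Omega> (\<lambda>x. D2u x i)) \<and>
      (\<forall>x\<in>closure \<Omega>. norm (Du x) < 1) \<and>
      (\<forall>x\<in>\<Omega>. divergence (\<lambda>y. (1 / sqrt (1 - (norm (Du y))\<^sup>2)) *\<^sub>R Du y) x
                 = \<alpha> / (u x * sqrt (1 - (norm (Du x))\<^sup>2))) \<and>
      (\<forall>x\<in>frontier \<Omega>. u x = \<phi> x))"

end

theory Submission
  imports Defs
begin

text \<open>
  Lower bound: at an interior minimum of \<open>u\<close> the gradient vanishes and the Hessian is
  positive semidefinite, so the left-hand side of the equation equals the trace of the
  Hessian and is \<open>\<ge> 0\<close>, while the right-hand side is \<open>\<alpha> / u < 0\<close>. Hence \<open>u\<close> attains its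
  minimum over the closure on the boundary, where it equals \<open>\<phi>\<close>.
  Upper bound: \<open>|Du| < 1\<close> makes \<open>u\<close> 1-Lipschitz on the largest ball around \<open>x\<close> inside \<open>\<Omega>\<close>,
  whose boundary touches \<open>\<partial>\<Omega>\<close>; so \<open>u \<le> sup \<phi> + diam \<Omega>\<close>.
\<close>

lemma DERIV_second_order_local_min:
  fixes f g :: "real \<Rightarrow> real"
  assumes "0 < d"
    and f': "\<And>t. \<bar>t\<bar> < d \<Longrightarrow> (f has_real_derivative g t) (at t)"
    and min: "\<And>t. \<bar>t\<bar> < d \<Longrightarrow> f 0 \<le> f t"
    and g': "(g has_real_derivative c) (at 0)"
  shows "0 \<le> c"
proof (rule ccontr)
  assume "\<not> 0 \<le> c"
  then obtain e where "0 < e" and g_neg: "\<And>h. 0 < h \<Longrightarrow> h < e \<Longrightarrow> g h < g 0"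
    using DERIV_neg_dec_right[OF g'] by force
  have "g 0 = 0"
    using DERIV_local_min[OF f'[of 0] \<open>0 < d\<close>] min \<open>0 < d\<close> by simp
  define t where "t = min d e / 2"
  have t: "0 < t" "t < d" "t < e"
    using \<open>0 < d\<close> \<open>0 < e\<close> by (auto simp: t_def)
  have "f t < f 0"
  proof (rule DERIV_neg_imp_decreasing_open[OF \<open>0 < t\<close>])
    fix s assume "0 < s" "s < t"
    then show "\<exists>y. (f has_real_derivative y) (at s) \<and> y < 0"
      using f'[of s] g_neg[of s] \<open>g 0 = 0\<close> t by auto
  next
    have "isCont f s" if "s \<in> {0..t}" for s
      using f'[of s] that t by (auto intro: DERIV_isCont)
    then show "continuous_on {0..t} f"
      by (simp add: continuous_at_imp_continuous_on)
  qed
  with min[of t] t show False by simp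
qed

lemma local_min_gradient_eq_0:
  fixes u :: "'a::real_inner \<Rightarrow> real"
  assumes "open S" "x0 \<in> S"
    and "(u has_derivative (\<lambda>h. Du \<bullet> h)) (at x0)"
    and "\<forall>w\<in>S. u x0 \<le> u w"
  shows "Du = 0"
proof -
  have "\<forall>\<^sub>F y in at x0. u x0 \<le> u y"
    unfolding eventually_at_topological using assms(1,2,4) by blast
  then have "(\<lambda>h. Du \<bullet> h) = (\<lambda>h. 0)"
    using has_derivative_local_min[OF assms(3)] by blast
  then show ?thesis
    by (metis inner_eq_zero_iff)
qed

lemma local_min_hessian_nonneg:
  fixes u :: "'a::real_inner \<Rightarrow> real"
  assumes "open S" "x0 \<in> S"
    and du: "\<forall>x\<in>S. (u has_derivative (\<lambda>h. Du x \<bullet> h)) (at x)"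
    and d2: "(Du has_derivative D) (at x0)"
    and min: "\<forall>w\<in>S. u x0 \<le> u w"
  shows "0 \<le> D v \<bullet> v"
proof -
  obtain e where "0 < e" "ball x0 e \<subseteq> S"
    using assms(1,2) open_contains_ball by blast
  define d where "d = e / (norm v + 1)"
  have "0 < d"
    using \<open>0 < e\<close> norm_ge_zero[of v] unfolding d_def by (intro divide_pos_pos) linarith+
  have line_in_S: "x0 + t *\<^sub>R v \<in> S" if "\<bar>t\<bar> < d" for t
  proof -
    have "norm (t *\<^sub>R v) \<le> \<bar>t\<bar> * (norm v + 1)"
      by (simp add: mult_left_mono)
    also have "\<dots> < e"
      using that norm_ge_zero[of v] by (simp add: d_def pos_less_divide_eq)
    finally show ?thesis
      using \<open>ball x0 e \<subseteq> S\<close> by (auto simp: dist_norm)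
  qed
  have line: "((\<lambda>t. x0 + t *\<^sub>R v) has_derivative (\<lambda>h. h *\<^sub>R v)) (at t)" for t
    by (auto intro!: derivative_eq_intros)
  have f': "((\<lambda>t. u (x0 + t *\<^sub>R v)) has_real_derivative Du (x0 + t *\<^sub>R v) \<bullet> v) (at t)"
    if "\<bar>t\<bar> < d" for t
    using has_derivative_compose[OF line du[rule_format, OF line_in_S[OF that]]]
    by (simp add: has_field_derivative_def mult_commute_abs)
  have "((\<lambda>t. Du (x0 + t *\<^sub>R v)) has_derivative (\<lambda>h. D (h *\<^sub>R v))) (at 0)"
    using has_derivative_compose[OF line[of 0], of Du D] d2 by simp
  then have "((\<lambda>t. Du (x0 + t *\<^sub>R v) \<bullet> v) has_derivative (\<lambda>h. D (h *\<^sub>R v) \<bullet> v)) (at 0)"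
    by (rule has_derivative_inner_left)
  moreover have "(\<lambda>h. D (h *\<^sub>R v) \<bullet> v) = (\<lambda>h. h * (D v \<bullet> v))"
    using has_derivative_linear[OF d2] by (simp add: linear_scale)
  ultimately have g': "((\<lambda>t. Du (x0 + t *\<^sub>R v) \<bullet> v) has_real_derivative D v \<bullet> v) (at 0)"
    by (simp add: has_field_derivative_def mult_commute_abs)
  show ?thesis
    using DERIV_second_order_local_min[OF \<open>0 < d\<close> f' _ g'] min line_in_S by simp
qed

lemma differentiable_at_lorentz_factor:
  fixes Du :: "'a::real_normed_vector \<Rightarrow> 'b::real_inner"
  assumes "Du differentiable (at x0)" "norm (Du x0) < 1"
  shows "(\<lambda>y. 1 / sqrt (1 - (norm (Du y))\<^sup>2)) differentiable (at x0)"
proof -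
  have eq: "(\<lambda>y. 1 / sqrt (1 - (norm (Du y))\<^sup>2)) = (\<lambda>y. inverse (sqrt (1 - Du y \<bullet> Du y)))"
    by (simp add: power2_norm_eq_inner divide_inverse)
  have "0 < 1 - Du x0 \<bullet> Du x0"
    using assms(2) by (metis abs_norm_cancel abs_square_less_1 diff_gt_0_iff_gt power2_norm_eq_inner)
  then have "(\<lambda>t. inverse (sqrt t)) differentiable (at (1 - Du x0 \<bullet> Du x0))"
    unfolding differentiable_def
    by (auto intro!: derivative_eq_intros exI simp: has_field_derivative_def[symmetric])
  moreover have "(\<lambda>y. 1 - Du y \<bullet> Du y) differentiable (at x0)"
    using assms(1) by (intro differentiable_diff differentiable_const differentiable_inner)
  ultimately show ?thesis
    unfolding eq using differentiable_compose by (force simp: o_def)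
qed

text \<open>At a critical point of \<open>u\<close> the factor \<open>1 / sqrt (1 - |Du|\<^sup>2)\<close> has value 1 and multiplies
  a vanishing field, so only the Laplacian term of the divergence survives.\<close>
lemma divergence_lorentz_field_at_critical_point:
  fixes Du :: "'a::euclidean_space \<Rightarrow> 'a"
  assumes d2: "(Du has_derivative D) (at x0)" and "Du x0 = 0"
  shows "divergence (\<lambda>y. (1 / sqrt (1 - (norm (Du y))\<^sup>2)) *\<^sub>R Du y) x0 = (\<Sum>i\<in>Basis. D i \<bullet> i)"
proof -
  define c where "c y = 1 / sqrt (1 - (norm (Du y))\<^sup>2)" for y
  have "c differentiable (at x0)"
    unfolding c_def using assms by (intro differentiable_at_lorentz_factor) (auto simp: differentiable_def)
  then obtain c' where c': "(c has_derivative c') (at x0)"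
    by (auto simp: differentiable_def)
  have "((\<lambda>y. c y *\<^sub>R Du y) has_derivative (\<lambda>h. c x0 *\<^sub>R D h + c' h *\<^sub>R Du x0)) (at x0)"
    by (rule has_derivative_scaleR[OF c' d2])
  moreover have "c x0 = 1"
    using \<open>Du x0 = 0\<close> by (simp add: c_def)
  ultimately have "((\<lambda>y. c y *\<^sub>R Du y) has_derivative D) (at x0)"
    using \<open>Du x0 = 0\<close> by simp
  then show ?thesis
    unfolding divergence_def c_def by (metis frechet_derivative_at)
qed

lemma solution_min_not_in_domain:
  fixes u :: "'a::euclidean_space \<Rightarrow> real"
  assumes "open S" "x0 \<in> S" "\<alpha> < 0" "0 < u x0"
    and du: "\<forall>x\<in>S. (u has_derivative (\<lambda>h. Du x \<bullet> h)) (at x)"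
    and d2: "(Du has_derivative D) (at x0)"
    and min: "\<forall>w\<in>S. u x0 \<le> u w"
    and pde: "divergence (\<lambda>y. (1 / sqrt (1 - (norm (Du y))\<^sup>2)) *\<^sub>R Du y) x0
                 = \<alpha> / (u x0 * sqrt (1 - (norm (Du x0))\<^sup>2))"
  shows False
proof -
  have "Du x0 = 0"
    using local_min_gradient_eq_0[OF assms(1,2) _ min] du assms(2) by blast
  have "0 \<le> (\<Sum>i\<in>Basis. D i \<bullet> i)"
    using local_min_hessian_nonneg[OF assms(1,2) du d2 min] by (simp add: sum_nonneg)
  moreover have "\<alpha> / (u x0 * sqrt (1 - (norm (Du x0))\<^sup>2)) < 0"
    using \<open>Du x0 = 0\<close> assms(3,4) by (simp add: divide_neg_pos)
  ultimately show False
    using pde divergence_lorentz_field_at_critical_point[OF d2 \<open>Du x0 = 0\<close>] by simp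
qed

lemma nearest_frontier_point:
  fixes S :: "'a::euclidean_space set"
  assumes "x \<in> S" "S \<noteq> UNIV"
  obtains y where "y \<in> frontier S" "ball x (dist x y) \<subseteq> S"
proof -
  have "frontier S \<noteq> {}"
    using assms frontier_not_empty by blast
  then obtain y where y: "y \<in> frontier S" and nearest: "\<And>z. z \<in> frontier S \<Longrightarrow> dist x y \<le> dist x z"
    using distance_attains_inf[OF frontier_closed] by metis
  have "ball x (dist x y) \<subseteq> S"
  proof (rule ccontr)
    assume "\<not> ball x (dist x y) \<subseteq> S"
    then have "ball x (dist x y) - S \<noteq> {}" "x \<in> ball x (dist x y)"
      by auto
    then have "ball x (dist x y) \<inter> frontier S \<noteq> {}"
      using connected_Int_frontier[OF connected_ball] assms(1) by blast
    then show False
      using nearest by fastforce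
  qed
  with y that show ?thesis by blast
qed

lemma gradient_bound_imp_dist_bound_cball:
  fixes u :: "'a::euclidean_space \<Rightarrow> real"
  assumes "0 < r" "y \<in> cball x r"
    and uc: "continuous_on (cball x r) u"
    and du: "\<forall>w\<in>ball x r. (u has_derivative (\<lambda>h. Du w \<bullet> h)) (at w)"
    and bound: "\<forall>w\<in>ball x r. norm (Du w) \<le> B"
  shows "\<bar>u y - u x\<bar> \<le> B * dist x y"
proof -
  have "onorm (\<lambda>h. Du w \<bullet> h) \<le> B" if "w \<in> ball x r" for w
  proof -
    have "onorm (\<lambda>h. Du w \<bullet> h) \<le> norm (Du w) * onorm (\<lambda>h::'a. h)"
      by (rule onorm_inner_right[OF bounded_linear_ident])
    also have "\<dots> \<le> norm (Du w)"
      by (simp add: mult_left_le onorm_id_le)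
    also have "\<dots> \<le> B"
      using bound that by blast
    finally show ?thesis .
  qed
  then have "norm (u w - u x) \<le> B * norm (w - x)" if "w \<in> ball x r" for w
    using differentiable_bound[OF convex_ball, of x r u "\<lambda>w h. Du w \<bullet> h" B w x]
      du has_derivative_at_withinI that \<open>0 < r\<close> by fastforce
  then have in_ball: "\<bar>u w - u x\<bar> - B * dist x w \<le> 0" if "w \<in> ball x r" for w
    using that by (simp add: dist_norm norm_minus_commute)
  have cont: "continuous_on (closure (ball x r)) (\<lambda>w. \<bar>u w - u x\<bar> - B * dist x w)"
    using \<open>0 < r\<close> uc by (auto intro!: continuous_intros)
  have "y \<in> closure (ball x r)"
    using assms(1,2) by simp
  then show ?thesis
    using continuous_le_on_closure[OF cont _ in_ball] by simp
qed

lemma solution_ge_Inf_boundary: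
  fixes u :: "'a::euclidean_space \<Rightarrow> real"
  assumes "open \<Omega>" "bounded \<Omega>" "\<alpha> < 0" "\<forall>x\<in>\<Omega>. 0 < u x"
    and "is_solution \<alpha> \<Omega> \<phi> u" "x \<in> \<Omega>"
  shows "Inf (\<phi> ` frontier \<Omega>) \<le> u x"
proof -
  obtain Du D2u where uc: "continuous_on (closure \<Omega>) u"
    and du: "\<forall>x\<in>\<Omega>. (u has_derivative (\<lambda>h. Du x \<bullet> h)) (at x)"
    and d2: "\<forall>x\<in>\<Omega>. (Du has_derivative D2u x) (at x)"
    and pde: "\<forall>x\<in>\<Omega>. divergence (\<lambda>y. (1 / sqrt (1 - (norm (Du y))\<^sup>2)) *\<^sub>R Du y) x
                 = \<alpha> / (u x * sqrt (1 - (norm (Du x))\<^sup>2))"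
    and bc: "\<forall>x\<in>frontier \<Omega>. u x = \<phi> x"
    using assms(5) unfolding is_solution_def by (elim exE conjE) (rule that, assumption+)
  obtain x0 where x0: "x0 \<in> closure \<Omega>" and min: "\<forall>y\<in>closure \<Omega>. u x0 \<le> u y"
    using continuous_attains_inf[OF compact_closure[THEN iffD2, OF assms(2)] _ uc] assms(6)
      closure_subset by blast
  have "x0 \<notin> \<Omega>"
    using solution_min_not_in_domain[OF assms(1) _ assms(3) _ du] d2 pde min assms(4)
      closure_subset by blast
  then have "x0 \<in> frontier \<Omega>"
    using x0 assms(1) by (simp add: frontier_def interior_open)
  have "u x0 \<le> \<phi> y" if "y \<in> frontier \<Omega>" for y
    using min bc that by (fastforce simp: frontier_def)
  then have "bdd_below (\<phi> ` frontier \<Omega>)"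
    by (rule bdd_belowI2)
  then have "Inf (\<phi> ` frontier \<Omega>) \<le> u x0"
    using \<open>x0 \<in> frontier \<Omega>\<close> bc by (metis cInf_lower image_eqI)
  also have "u x0 \<le> u x"
    using min assms(6) closure_subset by blast
  finally show ?thesis .
qed

lemma solution_le_Sup_boundary_add_diameter:
  fixes u :: "'a::euclidean_space \<Rightarrow> real"
  assumes "open \<Omega>" "bounded \<Omega>" "is_solution \<alpha> \<Omega> \<phi> u" "x \<in> \<Omega>"
  shows "u x \<le> Sup (\<phi> ` frontier \<Omega>) + diameter \<Omega>"
proof -
  obtain Du where uc: "continuous_on (closure \<Omega>) u"
    and du: "\<forall>x\<in>\<Omega>. (u has_derivative (\<lambda>h. Du x \<bullet> h)) (at x)"
    and nb: "\<forall>x\<in>closure \<Omega>. norm (Du x) < 1"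
    and bc: "\<forall>x\<in>frontier \<Omega>. u x = \<phi> x"
    using assms(3) unfolding is_solution_def by (elim exE conjE) (rule that, assumption+)
  have "\<Omega> \<noteq> UNIV"
    using assms(2) not_bounded_UNIV by blast
  then obtain y where y: "y \<in> frontier \<Omega>" and ball: "ball x (dist x y) \<subseteq> \<Omega>"
    using nearest_frontier_point[OF assms(4)] by blast
  have "y \<notin> \<Omega>"
    using y assms(1) by (simp add: frontier_def interior_open)
  then have "0 < dist x y"
    using assms(4) by auto
  moreover have "cball x (dist x y) \<subseteq> closure \<Omega>"
    using closure_mono[OF ball] \<open>0 < dist x y\<close> by simp
  moreover have "\<forall>w\<in>ball x (dist x y). (u has_derivative (\<lambda>h. Du w \<bullet> h)) (at w)"
    using ball du by blast
  moreover have "\<forall>w\<in>ball x (dist x y). norm (Du w) \<le> 1"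
    using ball nb closure_subset by (fastforce intro: less_imp_le)
  ultimately have "\<bar>u y - u x\<bar> \<le> 1 * dist x y"
    using gradient_bound_imp_dist_bound_cball[of "dist x y" y x u Du 1] continuous_on_subset[OF uc]
    by (simp add: dist_commute)
  moreover have "bdd_above (\<phi> ` frontier \<Omega>)"
  proof -
    have "bounded (u ` closure \<Omega>)"
      using compact_continuous_image[OF uc] compact_closure assms(2) compact_imp_bounded by blast
    moreover have "\<phi> ` frontier \<Omega> \<subseteq> u ` closure \<Omega>"
      using bc by (force simp: frontier_def)
    ultimately show ?thesis
      by (meson bdd_above_mono bounded_imp_bdd_above)
  qed
  then have "u y \<le> Sup (\<phi> ` frontier \<Omega>)"
    using y bc by (auto intro: cSup_upper)
  moreover have "dist x y \<le> diameter \<Omega>"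
    using diameter_bounded_bound[of "closure \<Omega>" x y] diameter_closure[OF assms(2)] assms
      y closure_subset by (auto simp: frontier_def)
  ultimately show ?thesis
    by linarith
qed

theorem proposition4p6:
  fixes \<Omega> :: "'a::euclidean_space set" and \<alpha> :: real and \<phi> :: "'a \<Rightarrow> real"
  assumes "bounded_domain \<Omega>"
    and "\<alpha> < 0"
    and "\<forall>x\<in>frontier \<Omega>. \<phi> x > 0"
  shows "\<exists>C1>0. \<forall>u. ((\<forall>x\<in>\<Omega>. u x > 0) \<and> is_solution \<alpha> \<Omega> \<phi> u) \<longrightarrow>
           (\<forall>x\<in>\<Omega>. Inf (\<phi> ` frontier \<Omega>) \<le> u x \<and> u x \<le> C1)"
proof -
  have \<Omega>: "open \<Omega>" "bounded \<Omega>"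
    using assms(1) by (simp_all add: bounded_domain_def)
  define C1 where "C1 = max 1 (Sup (\<phi> ` frontier \<Omega>) + diameter \<Omega>)"
  have "Inf (\<phi> ` frontier \<Omega>) \<le> u x \<and> u x \<le> C1"
    if "\<forall>x\<in>\<Omega>. 0 < u x" "is_solution \<alpha> \<Omega> \<phi> u" "x \<in> \<Omega>" for u x
    using solution_ge_Inf_boundary[OF \<Omega> assms(2) that]
      solution_le_Sup_boundary_add_diameter[OF \<Omega> that(2,3)]
    unfolding C1_def by linarith
  moreover have "0 < C1"
    by (simp add: C1_def)
  ultimately show ?thesis
    by blast
qed

end
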